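(* Let $(\mathbb{T}_n)$ be the sequence of dyadic partitions. (a) If $\bm f\in\mathscr{F}$, then $x_{\bm f}$ admits the continuous quadratic variation $\langle x_{\bm f}\rangle_t=\int_0^tf_\infty^2(s)\,ds$ for all $t\in[0,1]$. (b) If $\bm f,\bm g\in\mathscr{F}$, then $x_{\bm f}$ and $x_{\bm g}$ admit the continuous covariation $\langle x_{\bm f},x_{\bm g}\rangle_t=\int_0^tf_\infty(s)g_\infty(s)\,ds$ for all $t\in[0,1]$. In particular, $\{x_{\bm f}:\bm f\in\mathscr{F}\}$ is a vector space of functions admitting a continuous quadratic variation.
   Context: Dyadic partitions: $\mathbb{T}_n=\{k2^{-n}:k=0,\dots,2^n\}$. For $s\in\mathbb{T}_n$, $s'$ is the successor of $s$ in $\mathbb{T}_n$ ($s'=1$ if $s=1$). For $x,y\in C[0,1]$, $\langle x,y\rangle^n_t:=\sum_{s\in\mathbb{T}_n,\,s\le t}(x(s')-x(s))(y(s')-y(s))$, $\langle x\rangle^n_t:=\langle x,x\rangle^n_t$; the quadratic variation is $\langle x\rangle_t=\lim_n\langle x\rangle^n_t$ and the covariation is $\langle x,y\rangle_t=\lim_n\langle x,y\rangle^n_t$, whenever these limits exist. Faber--Schauder functions: $e_{0,0}(t)=\max\{0,\min\{t,1-t\}\}$, $e_{n,k}(t)=2^{-n/2}e_{0,0}(2^nt-k)$ for $n\ge1$, $k=0,\dots,2^n-1$. $\mathscr{F}$ is the class of sequences $\bm f=(f_n)_{n\ge0}$ of bounded functions $f_n:[0,1]\to\mathbb{R}$ converging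 uniformly to a Riemann integrable function $f_\infty$. For $\bm f\in\mathscr{F}$, $\theta_{n,k}(\bm f):=f_n(k2^{-n})$ and $x_{\bm f}:=\sum_{n=0}^\infty\sum_{k=0}^{2^n-1}\theta_{n,k}(\bm f)e_{n,k}$ (an absolutely convergent series defining a continuous function). *)

theory Defs
  imports "HOL-Analysis.Analysis"
begin

definition dyadic :: "nat \<Rightarrow> real set" where
  "dyadic n = {real k / 2 ^ n | k. k \<le> 2 ^ n}"

definition dsucc :: "nat \<Rightarrow> real \<Rightarrow> real" where
  "dsucc n s = min 1 (s + 1 / 2 ^ n)"

definition cov_n :: "nat \<Rightarrow> (real \<Rightarrow> real) \<Rightarrow> (real \<Rightarrow> real) \<Rightarrow> real \<Rightarrow> real" where
  "cov_n n x y t = (\<Sum>s\<in>{s \<in> dyadic n. s \<le> t}.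
      (x (dsucc n s) - x s) * (y (dsucc n s) - y s))"

definition qv_n :: "nat \<Rightarrow> (real \<Rightarrow> real) \<Rightarrow> real \<Rightarrow> real" where
  "qv_n n x t = cov_n n x x t"

definition e00 :: "real \<Rightarrow> real" where
  "e00 t = max 0 (min t (1 - t))"

definition fs :: "nat \<Rightarrow> nat \<Rightarrow> real \<Rightarrow> real" where
  "fs n k t = 2 powr (- real n / 2) * e00 (2 ^ n * t - real k)"

definition riemann_integrable_on :: "(real \<Rightarrow> real) \<Rightarrow> real \<Rightarrow> real \<Rightarrow> bool" where
  "riemann_integrable_on f a b \<longleftrightarrow> (\<exists>I. \<forall>\<epsilon>>0. \<exists>\<delta>>0. \<forall>D.
      D tagged_division_of {a..b} \<and> (\<lambda>x. ball x \<delta>) fine D \<longrightarrow>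
      \<bar>(\<Sum>(x,K)\<in>D. Henstock_Kurzweil_Integration.content K * f x) - I\<bar> < \<epsilon>)"

definition classF :: "(nat \<Rightarrow> real \<Rightarrow> real) \<Rightarrow> (real \<Rightarrow> real) \<Rightarrow> bool" where
  "classF f finf \<longleftrightarrow> (\<forall>n. bounded (f n ` {0..1})) \<and>
      uniform_limit {0..1} f finf sequentially \<and> riemann_integrable_on finf 0 1"

definition xF :: "(nat \<Rightarrow> real \<Rightarrow> real) \<Rightarrow> real \<Rightarrow> real" where
  "xF f t = (\<Sum>n. \<Sum>k<2 ^ n. f n (real k / 2 ^ n) * fs n k t)"

end

theory Submission
  imports Defs "HOL-Real_Asymp.Real_Asymp"
begin

text \<open>At a dyadic point of level \<open>m\<close> only the Faber--Schauder levels \<open>n < m\<close> of \<open>x_f\<close> are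
  nonzero, and on each dyadic interval of level \<open>m\<close> the level-\<open>n\<close> term is affine, with increment
  \<open>\<plusminus>theta_{n,k} 2^(-n/2) 2^(n-m)\<close>. Multiplying two such sums of increments, the cross terms
  with \<open>n \<noteq> n'\<close> cancel blockwise up to \<open>O(2^-m)\<close>: the sign of the finer term flips halfway through
  each block on which the coarser term is constant. The diagonal terms contribute \<open>2^(n-m) P_n(t)\<close>,
  where \<open>P_n(t)\<close> is the left Riemann sum of \<open>f_n g_n\<close> over the level-\<open>n\<close> points in \<open>[0,t]\<close>.
  Hence \<open><x_f, x_g>^m_t = (\<Sum>n<m. 2^(n-m) P_n(t)) + O(m^2 2^-m)\<close>. Uniform convergence and Riemann
  integrability give \<open>P_n(t) \<rightarrow> \<integral>_0^t f_inf g_inf\<close>, and the weighted averages converge to the same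
  limit. Finally \<open>x_f\<close> is linear in \<open>f\<close>, and \<open>\<F>\<close> is closed under linear combinations.\<close>

section \<open>Dyadic Riemann sums\<close>

definition dyadic_interval :: "nat \<Rightarrow> nat \<Rightarrow> real set" where
  "dyadic_interval n q = {real q / 2^n .. real (Suc q) / 2^n}"

definition dyadic_count :: "nat \<Rightarrow> real \<Rightarrow> nat" where
  "dyadic_count n t = min (2^n) (nat \<lfloor>t * 2^n\<rfloor> + 1)"

lemma dyadic_interval_left: "real q / 2^n \<in> dyadic_interval n q"
  by (simp add: dyadic_interval_def divide_right_mono)

lemma dyadic_le_one: "q \<le> 2^n \<Longrightarrow> real q / 2^n \<le> (1::real)"
  by (simp add: field_simps)

lemma dyadic_interval_subset: "q < 2^n \<Longrightarrow> dyadic_interval n q \<subseteq> {0..1}"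
  using dyadic_le_one[of "Suc q" n] by (auto simp: dyadic_interval_def)

lemma dyadic_in_unit: "q < 2^n \<Longrightarrow> real q / 2^n \<in> {0..1}"
  using dyadic_interval_left dyadic_interval_subset by blast

lemma content_dyadic_interval:
  "Henstock_Kurzweil_Integration.content (dyadic_interval n q) = 1 / 2^n"
  by (simp add: dyadic_interval_def field_simps)

lemma dyadic_count_bounds:
  assumes "0 \<le> t" "t \<le> 1"
  shows "1 \<le> dyadic_count n t" "dyadic_count n t \<le> 2^n"
    "real (dyadic_count n t - 1) \<le> t * 2^n" "t * 2^n \<le> real (dyadic_count n t)"
proof -
  show "1 \<le> dyadic_count n t" "dyadic_count n t \<le> 2^n"
    unfolding dyadic_count_def by auto
  have "real (dyadic_count n t - 1) \<le> real (nat \<lfloor>t * 2^n\<rfloor>)"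
    unfolding dyadic_count_def by simp
  also have "\<dots> \<le> t * 2^n" using assms by simp
  finally show "real (dyadic_count n t - 1) \<le> t * 2^n" .
  show "t * 2^n \<le> real (dyadic_count n t)"
  proof (cases "nat \<lfloor>t * 2^n\<rfloor> + 1 \<le> 2^n")
    case True
    then have "dyadic_count n t = nat \<lfloor>t * 2^n\<rfloor> + 1" unfolding dyadic_count_def by simp
    then show ?thesis using assms by simp linarith
  next
    case False
    then have "dyadic_count n t = 2^n" unfolding dyadic_count_def by simp
    then show ?thesis using assms by simp
  qed
qed

lemma dyadic_count_iff:
  assumes "0 \<le> t"
  shows "j < dyadic_count n t \<longleftrightarrow> j < 2^n \<and> real j \<le> t * 2^n"
proof -
  have "j \<le> nat \<lfloor>t * 2^n\<rfloor> \<longleftrightarrow> real j \<le> t * 2^n"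
    using assms le_floor_iff[of "int j" "t * 2^n"] by (simp add: le_nat_iff)
  then show ?thesis unfolding dyadic_count_def by auto
qed

lemma dyadic_count_refine:
  assumes nm: "n \<le> m" and t: "0 \<le> t" "t \<le> 1"
  shows "(dyadic_count n t - 1) * 2^(m-n) \<le> dyadic_count m t" "dyadic_count m t \<le> dyadic_count n t * 2^(m-n)"
proof -
  define B where "B = (2::nat)^(m-n)"
  have pm: "(2::nat)^m = 2^n * B" unfolding B_def using nm by (simp add: power_add[symmetric])
  have pmr: "(2::real)^m = 2^n * real B" unfolding B_def using nm by (simp add: power_add[symmetric])
  have Bpos: "B > 0" unfolding B_def by simp
  show "(dyadic_count n t - 1) * 2^(m-n) \<le> dyadic_count m t"
  proof -
    have "dyadic_count n t - 1 < 2^n" using dyadic_count_bounds(1,2)[OF t, of n] by linarith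
    then have "(dyadic_count n t - 1) * B < 2^n * B" using Bpos by simp
    then have a: "(dyadic_count n t - 1) * B < 2^m" unfolding pm .
    have "real ((dyadic_count n t - 1) * B) = real (dyadic_count n t - 1) * real B" by simp
    also have "\<dots> \<le> t * 2^n * real B" using dyadic_count_bounds(3)[OF t, of n] Bpos by (intro mult_right_mono) auto
    also have "\<dots> = t * 2^m" unfolding pmr by simp
    finally have "(dyadic_count n t - 1) * B < dyadic_count m t" using dyadic_count_iff[OF t(1)] a by blast
    then show ?thesis unfolding B_def by simp
  qed
  show "dyadic_count m t \<le> dyadic_count n t * 2^(m-n)"
  proof (rule ccontr)
    assume "\<not> ?thesis"
    then have "dyadic_count n t * B < dyadic_count m t" unfolding B_def by simp
    then have c: "dyadic_count n t * B < 2^m" "real (dyadic_count n t * B) \<le> t * 2^m" using dyadic_count_iff[OF t(1)] by blast+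
    from c(1) have "dyadic_count n t < 2^n" unfolding pm using Bpos by simp
    moreover from c(2) have "real (dyadic_count n t) \<le> t * 2^n" unfolding pmr using Bpos by (simp add: mult.assoc)
    ultimately have "dyadic_count n t < dyadic_count n t" using dyadic_count_iff[OF t(1)] by blast
    then show False by simp
  qed
qed

lemma dyadic_interval_containing:
  assumes "y \<in> {0..1}"
  shows "dyadic_count n y - 1 < 2^n" "y \<in> dyadic_interval n (dyadic_count n y - 1)"
proof -
  note b = dyadic_count_bounds[of y n]
  show "dyadic_count n y - 1 < 2^n" using assms b(1,2) by auto
  have "real (Suc (dyadic_count n y - 1)) = real (dyadic_count n y)" using assms b(1) by simp
  then show "y \<in> dyadic_interval n (dyadic_count n y - 1)"
    using assms b(3,4) unfolding dyadic_interval_def by (auto simp: field_simps)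
qed

lemma eventually_inverse_pow2_less:
  assumes "(\<delta>::real) > 0" shows "\<forall>\<^sub>F n in sequentially. 1 / 2^n < \<delta>"
proof -
  have "(\<lambda>n. 1 / (2::real)^n) \<longlonglongrightarrow> 0" by real_asymp
  then show ?thesis using assms by (rule order_tendstoD)
qed

lemma dyadic_tagged_division:
  assumes x: "\<forall>q<2^n. x q \<in> dyadic_interval n q"
  shows "(\<lambda>q. (x q, dyadic_interval n q)) ` {..<2^n} tagged_division_of {0..1}"
proof (rule tagged_division_ofI)
  let ?D = "(\<lambda>q. (x q, dyadic_interval n q)) ` {..<2^n}"
  show "finite ?D" by simp
  show "y \<in> K" "\<exists>a b. K = cbox a b" if "(y, K) \<in> ?D" for y K
    using that x by (auto simp: dyadic_interval_def)
  show "K \<subseteq> {0..1}" if "(y, K) \<in> ?D" for y K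
    using that dyadic_interval_subset by auto
  show "interior K1 \<inter> interior K2 = {}"
    if "(x1, K1) \<in> ?D" "(x2, K2) \<in> ?D" "(x1, K1) \<noteq> (x2, K2)" for x1 K1 x2 K2
  proof -
    have disj: "interior (dyadic_interval n q1) \<inter> interior (dyadic_interval n q2) = {}"
      if "q1 < q2" for q1 q2
    proof -
      have "real (Suc q1) / 2^n \<le> real q2 / 2^n"
        using that by (simp add: divide_right_mono)
      then show ?thesis by (auto simp: dyadic_interval_def)
    qed
    from that obtain q1 q2 where "K1 = dyadic_interval n q1" "K2 = dyadic_interval n q2" "q1 \<noteq> q2"
      by auto
    then show ?thesis using disj[of q1 q2] disj[of q2 q1] by (cases "q1 < q2") auto
  qed
  show "\<Union>{K. \<exists>y. (y, K) \<in> ?D} = {0..1}"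
    using dyadic_interval_subset dyadic_interval_containing by blast
qed

lemma dyadic_tagged_division_fine:
  assumes x: "\<forall>q<2^n. x q \<in> dyadic_interval n q" and "1 / 2^n < \<delta>"
  shows "(\<lambda>y. ball y \<delta>) fine ((\<lambda>q. (x q, dyadic_interval n q)) ` {..<2^n})"
  unfolding fine_def
proof safe
  fix q z assume q: "q < (2::nat)^n" and z: "z \<in> dyadic_interval n q"
  have "real (Suc q) / 2^n = real q / 2^n + 1 / 2^n" by (simp add: field_simps)
  then have "\<bar>x q - z\<bar> \<le> 1 / 2^n"
    using x q z unfolding dyadic_interval_def atLeastAtMost_iff abs_le_iff by fastforce
  then show "z \<in> ball (x q) \<delta>" using assms(2) by (simp add: dist_real_def)
qed

lemma dyadic_riemann_sum:
  "(\<Sum>(y,K)\<in>(\<lambda>q. (x q, dyadic_interval n q)) ` {..<2^n}.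
      Henstock_Kurzweil_Integration.content K * h y) = (\<Sum>q<2^n. h (x q)) / 2^n"
proof -
  have "inj_on (\<lambda>q. (x q, dyadic_interval n q)) {..<2^n}"
    by (rule inj_onI) (simp add: dyadic_interval_def Icc_eq_Icc divide_right_mono)
  then show ?thesis
    by (simp add: sum.reindex content_dyadic_interval sum_divide_distrib)
qed

lemma riemann_integrable_on_imp_integrable_on:
  assumes "riemann_integrable_on h 0 1"
  shows "h integrable_on {0..1}"
proof -
  from assms obtain I where I: "\<forall>\<epsilon>>0. \<exists>\<delta>>0. \<forall>D.
      D tagged_division_of {0..1} \<and> (\<lambda>x. ball x \<delta>) fine D \<longrightarrow>
      \<bar>(\<Sum>(x,K)\<in>D. Henstock_Kurzweil_Integration.content K * h x) - I\<bar> < \<epsilon>"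
    unfolding riemann_integrable_on_def by blast
  have "(h has_integral I) {0..1}"
    unfolding has_integral_real
  proof (intro allI impI)
    fix e :: real assume "e > 0"
    with I obtain \<delta> where "\<delta> > 0" and "\<forall>D.
      D tagged_division_of {0..1} \<and> (\<lambda>x. ball x \<delta>) fine D \<longrightarrow>
      \<bar>(\<Sum>(x,K)\<in>D. Henstock_Kurzweil_Integration.content K * h x) - I\<bar> < e" by blast
    then show "\<exists>\<gamma>. gauge \<gamma> \<and> (\<forall>\<D>. \<D> tagged_division_of {0..1} \<and> \<gamma> fine \<D> \<longrightarrow>
        norm ((\<Sum>(x, k)\<in>\<D>. Henstock_Kurzweil_Integration.content k *\<^sub>R h x) - I) < e)"
      by (intro exI[of _ "\<lambda>x. ball x \<delta>"]) auto
  qed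
  then show ?thesis by blast
qed

definition small_dyadic_oscillation :: "(real \<Rightarrow> real) \<Rightarrow> bool" where
  "small_dyadic_oscillation h \<longleftrightarrow> (\<forall>\<epsilon>>0. \<exists>N. \<forall>n\<ge>N. \<forall>x. (\<forall>q<2^n. x q \<in> dyadic_interval n q) \<longrightarrow>
      (\<Sum>q<2^n. \<bar>h (x q) - h (real q / 2^n)\<bar>) / 2^n < \<epsilon>)"

lemma riemann_integrable_on_small_dyadic_oscillation:
  assumes "riemann_integrable_on h 0 1"
  shows "small_dyadic_oscillation h"
  unfolding small_dyadic_oscillation_def
proof (intro allI impI)
  fix \<epsilon> :: real assume "\<epsilon> > 0"
  from assms obtain I where I: "\<forall>\<epsilon>>0. \<exists>\<delta>>0. \<forall>D.
      D tagged_division_of {0..1} \<and> (\<lambda>x. ball x \<delta>) fine D \<longrightarrow>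
      \<bar>(\<Sum>(x,K)\<in>D. Henstock_Kurzweil_Integration.content K * h x) - I\<bar> < \<epsilon>"
    unfolding riemann_integrable_on_def by blast
  with \<open>\<epsilon> > 0\<close> obtain \<delta> where "\<delta> > 0" and \<delta>: "\<forall>D.
      D tagged_division_of {0..1} \<and> (\<lambda>x. ball x \<delta>) fine D \<longrightarrow>
      \<bar>(\<Sum>(x,K)\<in>D. Henstock_Kurzweil_Integration.content K * h x) - I\<bar> < \<epsilon>/4"
    by (metis divide_pos_pos zero_less_numeral)
  obtain N where N: "\<forall>n\<ge>N. 1 / 2^n < \<delta>"
    using eventually_inverse_pow2_less[OF \<open>\<delta> > 0\<close>] unfolding eventually_sequentially by blast
  have close: "\<bar>(\<Sum>q<2^n. h (x q)) / 2^n - I\<bar> < \<epsilon>/4"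
    if "n \<ge> N" "\<forall>q<2^n. x q \<in> dyadic_interval n q" for n x
    using \<delta> dyadic_tagged_division[OF that(2)] dyadic_tagged_division_fine[OF that(2)] N that(1)
      dyadic_riemann_sum[where x=x and n=n and h=h] by auto
  show "\<exists>N. \<forall>n\<ge>N. \<forall>x. (\<forall>q<2^n. x q \<in> dyadic_interval n q) \<longrightarrow>
      (\<Sum>q<2^n. \<bar>h (x q) - h (real q / 2^n)\<bar>) / 2^n < \<epsilon>"
  proof (intro exI[of _ N] allI impI)
    fix n x assume n: "n \<ge> N" and x: "\<forall>q<(2::nat)^n. x q \<in> dyadic_interval n q"
    \<comment> \<open>Each absolute difference is the difference of an upper and a lower tag choice.\<close>
    define l where "l q = real q / 2^n" for q
    define y where "y q = (if h (x q) \<ge> h (l q) then x q else l q)" for q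
    define z where "z q = (if h (x q) \<ge> h (l q) then l q else x q)" for q
    have "\<forall>q<2^n. y q \<in> dyadic_interval n q" "\<forall>q<2^n. z q \<in> dyadic_interval n q"
      using x dyadic_interval_left unfolding y_def z_def l_def by auto
    note yz = close[OF n this(1)] close[OF n this(2)]
    have "\<bar>h (x q) - h (l q)\<bar> = h (y q) - h (z q)" for q
      unfolding y_def z_def by auto
    then have "(\<Sum>q<2^n. \<bar>h (x q) - h (real q / 2^n)\<bar>) / 2^n
        = (\<Sum>q<2^n. h (y q)) / 2^n - (\<Sum>q<2^n. h (z q)) / 2^n"
      by (simp add: l_def sum_subtractf diff_divide_distrib)
    also have "\<dots> < \<epsilon>"
      using yz \<open>\<epsilon> > 0\<close> by linarith
    finally show "(\<Sum>q<2^n. \<bar>h (x q) - h (real q / 2^n)\<bar>) / 2^n < \<epsilon>" .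
  qed
qed


lemma abs_mult_diff_le:
  fixes a b c d :: real
  assumes "\<bar>a\<bar> \<le> M" "\<bar>d\<bar> \<le> M"
  shows "\<bar>a * b - c * d\<bar> \<le> M * \<bar>b - d\<bar> + M * \<bar>a - c\<bar>"
proof -
  have "\<bar>a * b - c * d\<bar> = \<bar>a * (b - d) + d * (a - c)\<bar>" by (simp add: algebra_simps)
  also have "\<dots> \<le> \<bar>a\<bar> * \<bar>b - d\<bar> + \<bar>d\<bar> * \<bar>a - c\<bar>"
    by (metis abs_mult abs_triangle_ineq)
  also have "\<dots> \<le> M * \<bar>b - d\<bar> + M * \<bar>a - c\<bar>"
    using assms by (intro add_mono mult_right_mono) auto
  finally show ?thesis .
qed

lemma small_dyadic_oscillation_mult:
  assumes f: "small_dyadic_oscillation f" and g: "small_dyadic_oscillation g"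
    and M: "\<forall>x\<in>{0..1}. \<bar>f x\<bar> \<le> M \<and> \<bar>g x\<bar> \<le> M"
  shows "small_dyadic_oscillation (\<lambda>x. f x * g x)"
  unfolding small_dyadic_oscillation_def
proof (intro allI impI)
  fix \<epsilon> :: real assume "\<epsilon> > 0"
  have "M \<ge> 0" using M by force
  define e where "e = \<epsilon> / (2 * M + 1)"
  have "e > 0" using \<open>\<epsilon> > 0\<close> \<open>M \<ge> 0\<close> unfolding e_def by simp
  obtain N1 where N1: "\<forall>n\<ge>N1. \<forall>x. (\<forall>q<2^n. x q \<in> dyadic_interval n q) \<longrightarrow>
      (\<Sum>q<2^n. \<bar>f (x q) - f (real q / 2^n)\<bar>) / 2^n < e"
    using f \<open>e > 0\<close> unfolding small_dyadic_oscillation_def by blast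
  obtain N2 where N2: "\<forall>n\<ge>N2. \<forall>x. (\<forall>q<2^n. x q \<in> dyadic_interval n q) \<longrightarrow>
      (\<Sum>q<2^n. \<bar>g (x q) - g (real q / 2^n)\<bar>) / 2^n < e"
    using g \<open>e > 0\<close> unfolding small_dyadic_oscillation_def by blast
  show "\<exists>N. \<forall>n\<ge>N. \<forall>x. (\<forall>q<2^n. x q \<in> dyadic_interval n q) \<longrightarrow>
      (\<Sum>q<2^n. \<bar>f (x q) * g (x q) - f (real q / 2^n) * g (real q / 2^n)\<bar>) / 2^n < \<epsilon>"
  proof (intro exI[of _ "max N1 N2"] allI impI)
    fix n x assume n: "max N1 N2 \<le> n" and x: "\<forall>q<(2::nat)^n. x q \<in> dyadic_interval n q"
    let ?df = "\<lambda>q. \<bar>f (x q) - f (real q / 2^n)\<bar>" and ?dg = "\<lambda>q. \<bar>g (x q) - g (real q / 2^n)\<bar>"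
    have "\<bar>f (x q) * g (x q) - f (real q / 2^n) * g (real q / 2^n)\<bar> \<le> M * ?dg q + M * ?df q"
      if "q < 2^n" for q
      using that x M dyadic_interval_subset[OF that] dyadic_in_unit[OF that]
      by (intro abs_mult_diff_le) auto
    then have "(\<Sum>q<2^n. \<bar>f (x q) * g (x q) - f (real q / 2^n) * g (real q / 2^n)\<bar>) / 2^n
        \<le> (\<Sum>q<2^n. M * ?dg q + M * ?df q) / 2^n"
      by (intro divide_right_mono sum_mono) auto
    also have "\<dots> = M * ((\<Sum>q<2^n. ?dg q) / 2^n) + M * ((\<Sum>q<2^n. ?df q) / 2^n)"
      by (simp add: sum.distrib sum_distrib_left add_divide_distrib)
    also have "\<dots> \<le> M * e + M * e"
      using N1 N2 n x \<open>M \<ge> 0\<close> by (intro add_mono mult_left_mono) (auto intro: less_imp_le)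
    also have "\<dots> < (2 * M + 1) * e" using \<open>e > 0\<close> by simp
    also have "\<dots> = \<epsilon>" unfolding e_def using \<open>M \<ge> 0\<close> by simp
    finally show "(\<Sum>q<2^n. \<bar>f (x q) * g (x q) - f (real q / 2^n) * g (real q / 2^n)\<bar>) / 2^n < \<epsilon>" .
  qed
qed

lemma integral_dyadic_prefix:
  fixes h :: "real \<Rightarrow> real"
  assumes h: "h integrable_on {0..1}" and "p \<le> 2^n"
  shows "integral {0..real p / 2^n} h = (\<Sum>q<p. integral (dyadic_interval n q) h)"
  using \<open>p \<le> 2^n\<close>
proof (induction p)
  case (Suc p)
  have le: "real p / 2^n \<le> real (Suc p) / 2^n" by (simp add: divide_right_mono)
  have "h integrable_on {0..real (Suc p) / 2^n}"
    using integrable_subinterval_real[OF h] dyadic_le_one[OF Suc.prems] by auto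
  from Henstock_Kurzweil_Integration.integral_combine[OF _ le this]
  have "integral {0..real (Suc p) / 2^n} h
      = integral {0..real p / 2^n} h + integral (dyadic_interval n p) h"
    unfolding dyadic_interval_def by simp
  then show ?case using Suc by simp
qed simp

lemma integral_dyadic_interval_deviation:
  fixes h :: "real \<Rightarrow> real"
  assumes h: "h integrable_on (dyadic_interval n q)" and "\<eta> > 0"
  shows "\<exists>x\<in>dyadic_interval n q. \<bar>integral (dyadic_interval n q) h - h (real q / 2^n) / 2^n\<bar>
           \<le> (\<bar>h x - h (real q / 2^n)\<bar> + \<eta>) / 2^n"
proof (rule ccontr)
  define l where "l = real q / 2^n"
  define A where "A = integral (dyadic_interval n q) h - h l / 2^n"
  assume "\<not> ?thesis"
  then have lt: "\<forall>x\<in>dyadic_interval n q. \<bar>h x - h l\<bar> < \<bar>A\<bar> * 2^n - \<eta>"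
    unfolding A_def l_def by (auto simp: field_simps not_le)
  have "0 \<le> \<bar>A\<bar> * 2^n - \<eta>"
    using lt dyadic_interval_left[of q n] unfolding l_def by force
  have "((\<lambda>s. h l) has_integral (h l / 2^n)) (dyadic_interval n q)"
    using has_integral_const_real[of "h l" "real q / 2^n" "real (Suc q) / 2^n"]
    by (simp add: dyadic_interval_def field_simps)
  then have "((\<lambda>s. h s - h l) has_integral A) (dyadic_interval n q)"
    unfolding A_def using h by (intro has_integral_diff) auto
  then have "norm A \<le> (\<bar>A\<bar> * 2^n - \<eta>)
      * Henstock_Kurzweil_Integration.content (cbox (real q / 2^n) (real (Suc q) / 2^n))"
    using \<open>0 \<le> \<bar>A\<bar> * 2^n - \<eta>\<close> lt
    by (intro has_integral_bound) (auto simp: dyadic_interval_def less_imp_le)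
  also have "\<dots> = \<bar>A\<bar> - \<eta> / 2^n" by (simp add: field_simps)
  finally show False using \<open>\<eta> > 0\<close> by (simp add: field_simps)
qed

lemma integral_dyadic_prefix_deviation:
  fixes h :: "real \<Rightarrow> real"
  assumes h: "h integrable_on {0..1}" and p: "p \<le> 2^n" and "\<eta> > 0"
  shows "\<exists>x. (\<forall>q<2^n. x q \<in> dyadic_interval n q) \<and>
    \<bar>integral {0..real p / 2^n} h - (\<Sum>q<p. h (real q / 2^n)) / 2^n\<bar>
      \<le> (\<Sum>q<2^n. \<bar>h (x q) - h (real q / 2^n)\<bar>) / 2^n + \<eta>"
proof -
  let ?I = "\<lambda>q. integral (dyadic_interval n q) h"
  have "\<exists>x. q < 2^n \<longrightarrow> x \<in> dyadic_interval n q \<and>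
      \<bar>?I q - h (real q / 2^n) / 2^n\<bar> \<le> (\<bar>h x - h (real q / 2^n)\<bar> + \<eta>) / 2^n" for q
  proof (cases "q < 2^n")
    case True
    then have "h integrable_on dyadic_interval n q"
      using dyadic_interval_subset unfolding dyadic_interval_def
      by (blast intro: integrable_subinterval_real[OF h])
    then show ?thesis using integral_dyadic_interval_deviation[OF _ \<open>\<eta> > 0\<close>] by blast
  qed auto
  then obtain x where x: "\<And>q. q < 2^n \<Longrightarrow> x q \<in> dyadic_interval n q \<and>
      \<bar>?I q - h (real q / 2^n) / 2^n\<bar> \<le> (\<bar>h (x q) - h (real q / 2^n)\<bar> + \<eta>) / 2^n"
    by metis
  have "\<bar>integral {0..real p / 2^n} h - (\<Sum>q<p. h (real q / 2^n)) / 2^n\<bar>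
      = \<bar>\<Sum>q<p. ?I q - h (real q / 2^n) / 2^n\<bar>"
    using integral_dyadic_prefix[OF h p] by (simp add: sum_subtractf sum_divide_distrib)
  also have "\<dots> \<le> (\<Sum>q<2^n. \<bar>?I q - h (real q / 2^n) / 2^n\<bar>)"
    using p by (intro order.trans[OF sum_abs] sum_mono2) auto
  also have "\<dots> \<le> (\<Sum>q<2^n. (\<bar>h (x q) - h (real q / 2^n)\<bar> + \<eta>) / 2^n)"
    using x by (intro sum_mono) auto
  also have "\<dots> = (\<Sum>q<2^n. \<bar>h (x q) - h (real q / 2^n)\<bar>) / 2^n + \<eta>"
    by (simp add: sum.distrib add_divide_distrib flip: sum_divide_distrib)
  finally show ?thesis using x by blast
qed

lemma abs_integral_le_mult_length:
  fixes h :: "real \<Rightarrow> real"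
  assumes h: "h integrable_on {0..1}" and K: "\<forall>x\<in>{0..1}. \<bar>h x\<bar> \<le> K"
    and "0 \<le> a" "a \<le> b" "b \<le> 1"
  shows "\<bar>integral {a..b} h\<bar> \<le> K * (b - a)"
proof -
  have "(h has_integral integral {a..b} h) (cbox a b)"
    using integrable_subinterval_real[OF h] assms(3-5) by auto
  moreover have "0 \<le> K" using K by force
  ultimately have "norm (integral {a..b} h) \<le> K * Henstock_Kurzweil_Integration.content (cbox a b)"
  proof (intro has_integral_bound)
    show "norm (h x) \<le> K" if "x \<in> cbox a b" for x
      using that K assms(3-5) by auto
  qed
  then show ?thesis using assms(4) by simp
qed


lemma dyadic_left_sums_tendsto_integral:
  fixes h :: "real \<Rightarrow> real"
  assumes h: "h integrable_on {0..1}" and K: "\<forall>x\<in>{0..1}. \<bar>h x\<bar> \<le> K"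
    and osc: "small_dyadic_oscillation h" and t: "0 \<le> t" "t \<le> 1"
  shows "(\<lambda>n. (\<Sum>q<dyadic_count n t. h (real q / 2^n)) / 2^n) \<longlonglongrightarrow> integral {0..t} h"
proof (rule LIMSEQ_I)
  fix r :: real assume "r > 0"
  have "K \<ge> 0" using K by force
  have "r/4 > 0" using \<open>r > 0\<close> by simp
  then obtain N1 where N1: "\<forall>n\<ge>N1. \<forall>x. (\<forall>q<2^n. x q \<in> dyadic_interval n q) \<longrightarrow>
      (\<Sum>q<2^n. \<bar>h (x q) - h (real q / 2^n)\<bar>) / 2^n < r/4"
    using osc unfolding small_dyadic_oscillation_def by blast
  have "(\<lambda>n. K / (2::real)^n) \<longlonglongrightarrow> 0" by real_asymp
  from order_tendstoD(2)[OF this, of "r/4"] \<open>r > 0\<close>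
  obtain N2 where N2: "\<forall>n\<ge>N2. K / 2^n < r/4" unfolding eventually_sequentially by auto
  show "\<exists>N. \<forall>n\<ge>N. norm ((\<Sum>q<dyadic_count n t. h (real q / 2^n)) / 2^n - integral {0..t} h) < r"
  proof (intro exI[of _ "max N1 N2"] allI impI)
    fix n assume n: "max N1 N2 \<le> n"
    define p where "p = dyadic_count n t - 1"
    define a where "a = real p / 2^n"
    note count = dyadic_count_bounds[OF t, of n]
    have count_eq: "dyadic_count n t = Suc p" using count(1) unfolding p_def by simp
    have "p < 2^n" using count(2) count_eq by simp
    have "0 \<le> a" unfolding a_def by simp
    have "a \<le> t" using count(3) unfolding a_def p_def by (simp add: field_simps)
    have "t \<le> a + 1 / 2^n" using count(4) count_eq unfolding a_def by (simp add: field_simps)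
    then have "t - a \<le> 1 / 2^n" by simp
    have "\<bar>integral {a..t} h\<bar> \<le> K * (t - a)"
      using abs_integral_le_mult_length[OF h K \<open>0 \<le> a\<close> \<open>a \<le> t\<close> t(2)] .
    also have "\<dots> \<le> K * (1 / 2^n)" using \<open>t - a \<le> 1 / 2^n\<close> \<open>K \<ge> 0\<close> by (rule mult_left_mono)
    finally have tail: "\<bar>integral {a..t} h\<bar> \<le> K / 2^n" by simp
    have "\<bar>h a\<bar> \<le> K" using K \<open>0 \<le> a\<close> \<open>a \<le> t\<close> t by auto
    then have last: "\<bar>h a / 2^n\<bar> \<le> K / 2^n" by (simp add: divide_right_mono)
    obtain x where "\<forall>q<2^n. x q \<in> dyadic_interval n q" and
      prefix: "\<bar>integral {0..a} h - (\<Sum>q<p. h (real q / 2^n)) / 2^n\<bar>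
        \<le> (\<Sum>q<2^n. \<bar>h (x q) - h (real q / 2^n)\<bar>) / 2^n + r/4"
      using integral_dyadic_prefix_deviation[OF h less_imp_le[OF \<open>p < 2^n\<close>], of "r/4"] \<open>r > 0\<close>
      unfolding a_def by auto
    then have osc_small: "(\<Sum>q<2^n. \<bar>h (x q) - h (real q / 2^n)\<bar>) / 2^n < r/4"
      using N1 n by auto
    have "h integrable_on {0..t}" using integrable_subinterval_real[OF h] t by auto
    from Henstock_Kurzweil_Integration.integral_combine[OF \<open>0 \<le> a\<close> \<open>a \<le> t\<close> this]
    have "integral {0..t} h = integral {0..a} h + integral {a..t} h" by simp
    moreover have "(\<Sum>q<dyadic_count n t. h (real q / 2^n)) / 2^n
        = (\<Sum>q<p. h (real q / 2^n)) / 2^n + h a / 2^n"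
      unfolding count_eq a_def by (simp add: add_divide_distrib)
    moreover have "K / 2^n < r/4" using N2 n by simp
    ultimately show "norm ((\<Sum>q<dyadic_count n t. h (real q / 2^n)) / 2^n - integral {0..t} h) < r"
      unfolding real_norm_def using tail last prefix osc_small by argo
  qed
qed

section \<open>The class \<open>\<F>\<close>\<close>

lemma classF_bounded:
  assumes "classF f finf"
  shows "\<exists>M. \<forall>n. \<forall>x\<in>{0..1}. \<bar>f n x\<bar> \<le> M \<and> \<bar>finf x\<bar> \<le> M"
proof -
  have bd: "\<forall>n. bounded (f n ` {0..1})" and ul: "uniform_limit {0..1} f finf sequentially"
    using assms unfolding classF_def by auto
  have "\<forall>n. \<exists>B. \<forall>x\<in>{0..1}. \<bar>f n x\<bar> \<le> B"
    using bd unfolding bounded_iff by (auto simp: real_norm_def)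
  then obtain B where B: "\<And>n x. x \<in> {0..1} \<Longrightarrow> \<bar>f n x\<bar> \<le> B n" by metis
  from uniform_limitD[OF ul, of 1] obtain N
    where N: "\<And>n. n \<ge> N \<Longrightarrow> \<forall>x\<in>{0..1}. dist (f n x) (finf x) < 1"
    by (auto simp: eventually_sequentially)
  \<comment> \<open>Finitely many \<open>f n\<close> are bounded by \<open>B n\<close>; beyond \<open>N\<close>, \<open>f n\<close> lies within \<open>1\<close> of \<open>finf\<close>,
    which lies within \<open>1\<close> of \<open>f N\<close>.\<close>
  define M where "M = (\<Sum>n\<le>N. \<bar>B n\<bar>) + 2"
  have BM: "B n \<le> M - 2" if "n \<le> N" for n
  proof -
    have "B n \<le> \<bar>B n\<bar>" by simp
    also have "\<dots> \<le> (\<Sum>n\<le>N. \<bar>B n\<bar>)" using that by (intro member_le_sum) auto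
    finally show ?thesis unfolding M_def by simp
  qed
  have finf: "\<bar>finf x\<bar> \<le> M - 1" if x: "x \<in> {0..1}" for x
  proof -
    have "dist (f N x) (finf x) < 1" using N[of N] x by auto
    then have "\<bar>finf x\<bar> \<le> \<bar>f N x\<bar> + 1" by (simp add: dist_real_def)
    then show ?thesis using B[OF x, of N] BM[of N] by simp
  qed
  have "\<bar>f n x\<bar> \<le> M \<and> \<bar>finf x\<bar> \<le> M" if x: "x \<in> {0..1}" for n x
  proof (cases "n \<le> N")
    case True
    then show ?thesis using B[OF x, of n] BM[of n] finf[OF x] by simp
  next
    case False
    then have "dist (f n x) (finf x) < 1" using N[of n] x by auto
    then have "\<bar>f n x\<bar> \<le> \<bar>finf x\<bar> + 1" by (simp add: dist_real_def)
    then show ?thesis using finf[OF x] by simp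
  qed
  then show ?thesis by blast
qed

lemma classF_bounded_pair:
  assumes "classF f finf" "classF g ginf"
  obtains M where "\<And>n (x::real). x \<in> {0..1} \<Longrightarrow> \<bar>f n x\<bar> \<le> M \<and> \<bar>finf x\<bar> \<le> M \<and> \<bar>g n x\<bar> \<le> M \<and> \<bar>ginf x\<bar> \<le> M"
proof -
  obtain M1 where M1: "\<forall>n. \<forall>x\<in>{0..1}. \<bar>f n x\<bar> \<le> M1 \<and> \<bar>finf x\<bar> \<le> M1"
    using classF_bounded[OF assms(1)] by blast
  obtain M2 where M2: "\<forall>n. \<forall>x\<in>{0..1}. \<bar>g n x\<bar> \<le> M2 \<and> \<bar>ginf x\<bar> \<le> M2"
    using classF_bounded[OF assms(2)] by blast
  show ?thesis
  proof (rule that)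
    fix n and x :: real assume "x \<in> {0..1}"
    then show "\<bar>f n x\<bar> \<le> max M1 M2 \<and> \<bar>finf x\<bar> \<le> max M1 M2 \<and> \<bar>g n x\<bar> \<le> max M1 M2 \<and> \<bar>ginf x\<bar> \<le> max M1 M2"
      using M1 M2 by (simp add: le_max_iff_disj)
  qed
qed

lemma integrable_on_mult_bounded:
  fixes f g :: "real \<Rightarrow> real"
  assumes f: "f integrable_on {0..1}" and g: "g integrable_on {0..1}"
    and M: "\<forall>x\<in>{0..1}. \<bar>f x\<bar> \<le> M \<and> \<bar>g x\<bar> \<le> M"
  shows "(\<lambda>x. f x * g x) integrable_on {0..1}"
proof -
  have "g absolutely_integrable_on {0..1}"
    by (rule absolutely_integrable_integrable_bound[where g="\<lambda>_. M"]) (use M g in auto)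
  moreover have "f \<in> borel_measurable (lebesgue_on {0..1})" by (rule integrable_imp_measurable) fact
  moreover have "bounded (f ` {0..1})" unfolding bounded_iff using M by (auto simp: real_norm_def)
  ultimately have "(\<lambda>x. f x * g x) absolutely_integrable_on {0..1}"
    by (intro absolutely_integrable_bounded_measurable_product_real) auto
  then show ?thesis by (simp add: absolutely_integrable_on_def)
qed

lemma classF_integrable_on_mult:
  assumes "classF f finf" "classF g ginf"
  shows "(\<lambda>x. finf x * ginf x) integrable_on {0..1}"
proof -
  obtain M where "\<And>n x. x \<in> {0..1} \<Longrightarrow> \<bar>finf x\<bar> \<le> M \<and> \<bar>ginf x\<bar> \<le> M"
    using classF_bounded_pair[OF assms] by metis
  moreover have "finf integrable_on {0..1}" "ginf integrable_on {0..1}"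
    using assms riemann_integrable_on_imp_integrable_on unfolding classF_def by auto
  ultimately show ?thesis by (intro integrable_on_mult_bounded[where M=M]) auto
qed

lemma dyadic_left_sums_uniform_limit:
  fixes F :: "nat \<Rightarrow> real \<Rightarrow> real"
  assumes ul: "uniform_limit {0..1} F H sequentially" and t: "0 \<le> t" "t \<le> 1"
  shows "(\<lambda>n. (\<Sum>q<dyadic_count n t. F n (real q / 2^n)) / 2^n
              - (\<Sum>q<dyadic_count n t. H (real q / 2^n)) / 2^n) \<longlonglongrightarrow> 0"
proof (rule LIMSEQ_I)
  fix r :: real assume "r > 0"
  from uniform_limitD[OF ul, of "r/2"] \<open>r > 0\<close>
  obtain N where N: "\<And>n. n \<ge> N \<Longrightarrow> \<forall>x\<in>{0..1}. dist (F n x) (H x) < r/2"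
    by (auto simp: eventually_sequentially)
  show "\<exists>N. \<forall>n\<ge>N. norm ((\<Sum>q<dyadic_count n t. F n (real q / 2^n)) / 2^n
      - (\<Sum>q<dyadic_count n t. H (real q / 2^n)) / 2^n - 0) < r"
  proof (intro exI[of _ N] allI impI)
    fix n assume "N \<le> n"
    have count: "dyadic_count n t \<le> 2^n" using dyadic_count_bounds(2)[OF t] .
    have "\<bar>F n (real q / 2^n) - H (real q / 2^n)\<bar> \<le> r/2" if "q < dyadic_count n t" for q
    proof -
      have "real q / 2^n \<in> {0..1}" using dyadic_in_unit[of q n] that count by simp
      then show ?thesis using N[OF \<open>N \<le> n\<close>] by (auto simp: dist_real_def intro: less_imp_le)
    qed
    then have "\<bar>\<Sum>q<dyadic_count n t. F n (real q / 2^n) - H (real q / 2^n)\<bar> / 2^n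
        \<le> (\<Sum>q<dyadic_count n t. r/2) / 2^n"
      by (intro divide_right_mono order.trans[OF sum_abs] sum_mono) auto
    also have "\<dots> = real (dyadic_count n t) / 2^n * (r/2)" by simp
    also have "\<dots> \<le> 1 * (r/2)"
      using dyadic_le_one[OF count] \<open>r > 0\<close> by (intro mult_right_mono) auto
    also have "\<dots> < r" using \<open>r > 0\<close> by simp
    finally show "norm ((\<Sum>q<dyadic_count n t. F n (real q / 2^n)) / 2^n
        - (\<Sum>q<dyadic_count n t. H (real q / 2^n)) / 2^n - 0) < r"
      by (simp add: sum_subtractf diff_divide_distrib[symmetric])
  qed
qed

lemma classF_dyadic_sums_tendsto:
  assumes f: "classF f finf" and g: "classF g ginf" and t: "0 \<le> t" "t \<le> 1"
  shows "(\<lambda>n. (\<Sum>q<dyadic_count n t. f n (real q / 2^n) * g n (real q / 2^n)) / 2^n)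
           \<longlonglongrightarrow> integral {0..t} (\<lambda>s. finf s * ginf s)"
proof -
  obtain M where M: "\<And>n x. x \<in> {0..1} \<Longrightarrow>
      \<bar>f n x\<bar> \<le> M \<and> \<bar>finf x\<bar> \<le> M \<and> \<bar>g n x\<bar> \<le> M \<and> \<bar>ginf x\<bar> \<le> M"
    using classF_bounded_pair[OF f g] by metis
  have M': "\<forall>x\<in>{0..1}. \<bar>finf x\<bar> \<le> M \<and> \<bar>ginf x\<bar> \<le> M" using M by blast
  have osc: "small_dyadic_oscillation (\<lambda>x. finf x * ginf x)"
    using f g M' unfolding classF_def
    by (intro small_dyadic_oscillation_mult riemann_integrable_on_small_dyadic_oscillation) auto
  have "\<forall>x\<in>{0..1}. \<bar>finf x * ginf x\<bar> \<le> M * M"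
    using M' by (auto simp: abs_mult intro: mult_mono')
  from dyadic_left_sums_tendsto_integral[OF classF_integrable_on_mult[OF f g] this osc t]
  have limit: "(\<lambda>n. (\<Sum>q<dyadic_count n t. finf (real q / 2^n) * ginf (real q / 2^n)) / 2^n)
      \<longlonglongrightarrow> integral {0..t} (\<lambda>s. finf s * ginf s)" .
  have "uniform_limit {0..1} (\<lambda>n x. f n x * g n x) (\<lambda>x. finf x * ginf x) sequentially"
  proof (rule uniform_lim_mult)
    show "uniform_limit {0..1} f finf sequentially" "uniform_limit {0..1} g ginf sequentially"
      using f g unfolding classF_def by auto
    show "bounded (finf ` {0..1})" "bounded (ginf ` {0..1})"
      unfolding bounded_iff using M' by (auto simp: real_norm_def)
  qed
  from tendsto_add[OF dyadic_left_sums_uniform_limit[OF this t] limit] show ?thesis by simp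
qed


section \<open>The Faber--Schauder series at dyadic points\<close>

definition fs_level :: "(nat \<Rightarrow> real \<Rightarrow> real) \<Rightarrow> nat \<Rightarrow> real \<Rightarrow> real" where
  "fs_level f n t = (\<Sum>k<2^n. f n (real k / 2^n) * fs n k t)"

definition alt_sign :: "nat \<Rightarrow> real" where
  "alt_sign i = (if even i then 1 else -1)"

text \<open>For \<open>n < m\<close>, the level-\<open>n\<close> term with coefficients \<open>u\<close> is affine on each interval
  \<open>[j/2^m, (j+1)/2^m]\<close>, with slope \<open>\<plusminus>2^(n/2) u k\<close> on the two halves of the support of \<open>fs n k\<close>;
  this is its increment there.\<close>
definition level_increment :: "(nat \<Rightarrow> real) \<Rightarrow> nat \<Rightarrow> nat \<Rightarrow> nat \<Rightarrow> real" where
  "level_increment u m n j =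
     u (j div 2^(m-n)) * 2 powr (- real n / 2) * alt_sign (j div 2^(m-n-1)) / 2^(m-n)"

lemma e00_eq_0: "x \<le> 0 \<or> x \<ge> 1 \<Longrightarrow> e00 x = 0"
  by (auto simp: e00_def)

lemma e00_eq_left: "0 \<le> u \<Longrightarrow> u \<le> 1/2 \<Longrightarrow> e00 u = u"
  by (auto simp: e00_def)

lemma e00_eq_right: "1/2 \<le> u \<Longrightarrow> u \<le> 1 \<Longrightarrow> e00 u = 1 - u"
  by (auto simp: e00_def)

lemma e00_step_diff:
  assumes B: "B = 2 * C" "C > 0" and r: "r < B"
  shows "e00 ((real r + 1) / real B) - e00 (real r / real B) = alt_sign (r div C) / real B"
proof (cases "r < C")
  case True
  then have "real (Suc r) \<le> real C" by (simp only: of_nat_le_iff Suc_le_eq)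
  then have "(real r + 1) / real B \<le> 1/2" "real r / real B \<le> 1/2"
    using B by (simp_all add: field_simps)
  then have "e00 ((real r + 1) / real B) - e00 (real r / real B) = 1 / real B"
    by (simp add: e00_eq_left add_divide_distrib)
  then show ?thesis using True by (simp add: alt_sign_def)
next
  case False
  then have "r div C = 1" using r B by (simp add: div_nat_eqI)
  have "real C \<le> real r" "real (Suc r) \<le> real B" using False r by simp_all
  then have "1/2 \<le> real r / real B" "1/2 \<le> (real r + 1) / real B"
    "real r / real B \<le> 1" "(real r + 1) / real B \<le> 1"
    using B by (simp_all add: field_simps)
  then have "e00 ((real r + 1) / real B) - e00 (real r / real B) = - 1 / real B"
    by (simp add: e00_eq_right add_divide_distrib)
  then show ?thesis using \<open>r div C = 1\<close> by (simp add: alt_sign_def)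
qed

lemma fs_coarse_dyadic_eq_0:
  assumes "m \<le> n" shows "fs n k (real j / 2^m) = 0"
proof -
  have "(2::real)^n = 2^m * 2^(n-m)" using assms by (simp flip: power_add)
  then have "2^n * (real j / 2^m) - real k = real (j * 2^(n-m)) - real k" by simp
  moreover have "j * 2^(n-m) \<le> k \<or> k + 1 \<le> j * 2^(n-m)" by linarith
  then have "real (j * 2^(n-m)) - real k \<le> 0 \<or> real (j * 2^(n-m)) - real k \<ge> 1"
    by (metis diff_ge_0_iff_ge le_diff_eq add.commute of_nat_1 of_nat_add of_nat_le_iff
        diff_le_0_iff_le)
  ultimately show ?thesis by (simp add: fs_def e00_eq_0)
qed

lemma xF_dyadic_eq: "xF f (real j / 2^m) = (\<Sum>n<m. fs_level f n (real j / 2^m))"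
proof -
  have "xF f (real j / 2^m) = (\<Sum>n. fs_level f n (real j / 2^m))"
    unfolding xF_def fs_level_def ..
  also have "\<dots> = (\<Sum>n<m. fs_level f n (real j / 2^m))"
    by (rule suminf_finite) (auto simp: fs_level_def fs_coarse_dyadic_eq_0)
  finally show ?thesis .
qed

lemma fs_level_single:
  assumes q: "q < 2^n" and "real q \<le> 2^n * t" "2^n * t \<le> real q + 1"
  shows "fs_level f n t = f n (real q / 2^n) * fs n q t"
proof -
  have "f n (real k / 2^n) * fs n k t = 0" if "k \<noteq> q" for k
  proof -
    have "real k + 1 \<le> real q \<or> real q + 1 \<le> real k" using that by linarith
    then have "2^n * t - real k \<le> 0 \<or> 2^n * t - real k \<ge> 1" using assms(2,3) by linarith
    then show ?thesis by (simp add: fs_def e00_eq_0)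
  qed
  then have "fs_level f n t = (\<Sum>k\<in>{q}. f n (real k / 2^n) * fs n k t)"
    unfolding fs_level_def using q by (intro sum.mono_neutral_right) auto
  then show ?thesis by simp
qed

lemma fs_level_dyadic_diff:
  assumes "n < m" and j: "j < 2^m"
  shows "fs_level f n (real (Suc j) / 2^m) - fs_level f n (real j / 2^m)
           = level_increment (\<lambda>k. f n (real k / 2^n)) m n j"
proof -
  define B where "B = (2::nat)^(m-n)"
  define C where "C = (2::nat)^(m-n-1)"
  have BC: "B = 2 * C" unfolding B_def C_def using \<open>n < m\<close>
    by (metis Suc_diff_Suc diff_Suc_1 power_Suc zero_less_diff)
  have "C > 0" unfolding C_def by simp
  have pow_m: "(2::nat)^m = 2^n * B" unfolding B_def using \<open>n < m\<close> by (simp flip: power_add)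
  define q where "q = j div B"
  define r where "r = j mod B"
  have jqr: "j = q * B + r" unfolding q_def r_def by simp
  have "r < B" unfolding r_def using BC \<open>C > 0\<close> by simp
  have "q < 2^n" using j BC \<open>C > 0\<close> unfolding q_def pow_m by (simp add: div_less_iff_less_mult)
  have "(2::real)^m = 2^n * real B" unfolding B_def using \<open>n < m\<close> by (simp flip: power_add)
  then have scale: "2^n * (real i / 2^m) = real q + x" if "real i = real q * real B + x * real B" for i x
    using that BC \<open>C > 0\<close> by (simp add: field_simps)
  have at: "fs_level f n (real i / 2^m) = f n (real q / 2^n) * (2 powr (- real n / 2) * e00 x)"
    if "real i = real q * real B + x * real B" "0 \<le> x" "x \<le> 1" for i x
    using fs_level_single[OF \<open>q < 2^n\<close>] scale[OF that(1)] that(2,3) by (simp add: fs_def)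
  have "real B > 0" "real (Suc r) \<le> real B" using BC \<open>C > 0\<close> \<open>r < B\<close> by simp_all
  then have "fs_level f n (real (Suc j) / 2^m) - fs_level f n (real j / 2^m)
      = f n (real q / 2^n) * (2 powr (- real n / 2) * e00 ((real r + 1) / real B))
        - f n (real q / 2^n) * (2 powr (- real n / 2) * e00 (real r / real B))"
    using at[of "Suc j" "(real r + 1) / real B"] at[of j "real r / real B"]
    by (simp add: jqr field_simps)
  also have "\<dots> = f n (real q / 2^n) * 2 powr (- real n / 2)
        * (e00 ((real r + 1) / real B) - e00 (real r / real B))"
    by (simp add: algebra_simps)
  also have "e00 ((real r + 1) / real B) - e00 (real r / real B) = alt_sign (j div C) / real B"
  proof -
    have "j = r + (2 * q) * C" unfolding jqr BC by simp
    then have "j div C = 2 * q + r div C" using \<open>C > 0\<close> by simp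
    then have "alt_sign (j div C) = alt_sign (r div C)" by (simp add: alt_sign_def)
    then show ?thesis using e00_step_diff[OF BC \<open>C > 0\<close> \<open>r < B\<close>] by simp
  qed
  finally show ?thesis unfolding level_increment_def q_def B_def C_def by simp
qed

lemma xF_dyadic_diff:
  assumes "j < 2^m"
  shows "xF f (real (Suc j) / 2^m) - xF f (real j / 2^m)
           = (\<Sum>n<m. level_increment (\<lambda>k. f n (real k / 2^n)) m n j)"
  unfolding xF_dyadic_eq sum_subtractf[symmetric]
  using fs_level_dyadic_diff assms by (intro sum.cong) auto

lemma cov_n_dyadic_sum:
  assumes t: "0 \<le> t" "t \<le> 1"
  shows "cov_n m x y t = (\<Sum>j<dyadic_count m t.
    (x (real (Suc j) / 2^m) - x (real j / 2^m)) * (y (real (Suc j) / 2^m) - y (real j / 2^m)))"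
proof -
  define F where "F s = (x (dsucc m s) - x s) * (y (dsucc m s) - y s)" for s
  define A where "A = {j. j \<le> 2^m \<and> real j / 2^m \<le> t}"
  have "{s \<in> dyadic m. s \<le> t} = (\<lambda>j. real j / 2^m) ` A"
    unfolding dyadic_def A_def by auto
  moreover have "inj_on (\<lambda>j. real j / 2^m) A" by (auto simp: inj_on_def)
  ultimately have "cov_n m x y t = (\<Sum>j\<in>A. F (real j / 2^m))"
    unfolding cov_n_def F_def by (simp add: sum.reindex)
  \<comment> \<open>The only dyadic point left out is \<open>s = 1\<close>, whose increment vanishes since \<open>dsucc m 1 = 1\<close>.\<close>
  also have "\<dots> = (\<Sum>j<dyadic_count m t. F (real j / 2^m))"
  proof (rule sum.mono_neutral_right)
    show "finite A" unfolding A_def by simp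
    show "{..<dyadic_count m t} \<subseteq> A"
      unfolding A_def using dyadic_count_iff[OF t(1)] by (auto simp: field_simps)
    show "\<forall>j\<in>A - {..<dyadic_count m t}. F (real j / 2^m) = 0"
    proof
      fix j assume "j \<in> A - {..<dyadic_count m t}"
      then have "j = 2^m"
        unfolding A_def using dyadic_count_iff[OF t(1), of j m] by (auto simp: field_simps)
      then show "F (real j / 2^m) = 0" unfolding F_def dsucc_def by simp
    qed
  qed
  also have "\<dots> = (\<Sum>j<dyadic_count m t.
      (x (real (Suc j) / 2^m) - x (real j / 2^m)) * (y (real (Suc j) / 2^m) - y (real j / 2^m)))"
  proof (rule sum.cong[OF refl])
    fix j assume "j \<in> {..<dyadic_count m t}"
    then have "real (Suc j) / 2^m \<le> 1"
      using dyadic_count_iff[OF t(1)] dyadic_le_one[of "Suc j" m] by simp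
    then have "dsucc m (real j / 2^m) = real (Suc j) / 2^m"
      unfolding dsucc_def by (simp add: add_divide_distrib)
    then show "F (real j / 2^m) = (x (real (Suc j) / 2^m) - x (real j / 2^m))
        * (y (real (Suc j) / 2^m) - y (real j / 2^m))"
      unfolding F_def by simp
  qed
  finally show ?thesis .
qed


section \<open>Cancellations in the discrete covariation\<close>

lemma sum_div_blocks:
  fixes \<phi> :: "nat \<Rightarrow> real"
  shows "(\<Sum>j<p*B. \<phi> (j div B)) = real B * (\<Sum>q<p. \<phi> q)"
proof -
  have "(\<Sum>j<p*B. \<phi> (j div B)) = (\<Sum>q<p. \<Sum>j\<in>{q*B..<q*B+B}. \<phi> (j div B))"
    by (rule sum.nat_group[symmetric])
  also have "\<dots> = (\<Sum>q<p. real B * \<phi> q)"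
  proof (rule sum.cong[OF refl])
    fix q
    have "(\<Sum>j\<in>{q*B..<q*B+B}. \<phi> (j div B)) = (\<Sum>j\<in>{q*B..<q*B+B}. \<phi> q)"
    proof (rule sum.cong[OF refl])
      fix j assume j: "j \<in> {q*B..<q*B+B}"
      then have "B > 0" by auto
      with j have "j div B = q" by (auto intro: div_nat_eqI simp: mult.commute)
      then show "\<phi> (j div B) = \<phi> q" by simp
    qed
    then show "(\<Sum>j\<in>{q*B..<q*B+B}. \<phi> (j div B)) = real B * \<phi> q" by simp
  qed
  finally show ?thesis by (simp add: sum_distrib_left)
qed

lemma sum_div_blocks_partial:
  fixes \<phi> :: "nat \<Rightarrow> real"
  assumes B: "B > 0"
  shows "(\<Sum>j<J. \<phi> (j div B)) = real B * (\<Sum>q<J div B. \<phi> q) + real (J mod B) * \<phi> (J div B)"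
proof -
  define a where "a = J div B"
  define b where "b = J mod B"
  have J: "J = a * B + b" unfolding a_def b_def by simp
  have "(\<Sum>j<J. \<phi> (j div B)) = (\<Sum>j\<in>{0..<a*B}. \<phi> (j div B)) + (\<Sum>j\<in>{a*B..<J}. \<phi> (j div B))"
    unfolding lessThan_atLeast0 using J by (intro sum.atLeastLessThan_concat[symmetric]) auto
  also have "(\<Sum>j\<in>{a*B..<J}. \<phi> (j div B)) = (\<Sum>j\<in>{a*B..<J}. \<phi> a)"
  proof (rule sum.cong[OF refl])
    fix j assume j: "j \<in> {a*B..<J}"
    have "b < B" unfolding b_def using B by simp
    with j J have "j div B = a" by (auto intro: div_nat_eqI simp: mult.commute)
    then show "\<phi> (j div B) = \<phi> a" by simp
  qed
  also have "\<dots> = real b * \<phi> a" using J by simp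
  finally show ?thesis unfolding a_def b_def using sum_div_blocks[where p=a and B=B and \<phi>=\<phi>]
    by (simp add: lessThan_atLeast0 a_def)
qed

lemma sum_alt_pairs: "(\<Sum>i<2*k. c (i div 2) * alt_sign i) = (0::real)"
proof (induction k)
  case 0 then show ?case by simp
next
  case (Suc k)
  have e: "2 * Suc k = Suc (Suc (2*k))" by simp
  show ?case unfolding e sum.lessThan_Suc using Suc by (simp add: alt_sign_def)
qed

lemma sum_alt_blocks_bound:
  assumes C: "C > 0" and K: "\<bar>c (J div C div 2)\<bar> \<le> K"
  shows "\<bar>\<Sum>j<J. c (j div C div 2) * alt_sign (j div C)\<bar> \<le> real C * K"
proof -
  define a where "a = J div C"
  have K0: "K \<ge> 0" using K by linarith
  have m: "J mod C < C" using C by simp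
  have "(\<Sum>j<J. c (j div C div 2) * alt_sign (j div C)) = real C * (\<Sum>i<a. c (i div 2) * alt_sign i) + real (J mod C) * (c (a div 2) * alt_sign a)"
    unfolding a_def using sum_div_blocks_partial[OF C, of "\<lambda>i. c (i div 2) * alt_sign i" J] by simp
  also have "\<dots> = (if even a then real (J mod C) * c (a div 2) else (real C - real (J mod C)) * c (a div 2))"
  proof (cases "even a")
    case True
    then obtain k where "a = 2*k" by blast
    then show ?thesis using sum_alt_pairs[of c k] by (simp add: alt_sign_def)
  next
    case False
    then obtain k where k: "a = Suc (2*k)" by (metis oddE Suc_eq_plus1)
    then have "(\<Sum>i<a. c (i div 2) * alt_sign i) = c k" using sum_alt_pairs[of c k] by (simp add: alt_sign_def)
    moreover have "a div 2 = k" using k by simp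
    ultimately show ?thesis using False by (simp add: alt_sign_def algebra_simps)
  qed
  also have "\<bar>\<dots>\<bar> \<le> real C * K"
  proof -
    have ca: "\<bar>c (a div 2)\<bar> \<le> K" using K unfolding a_def .
    have "real (J mod C) \<le> real C" using m by simp
    then show ?thesis using ca K0
      by (auto simp: abs_mult intro: mult_mono)
  qed
  finally show ?thesis .
qed

lemma sum_div_blocks_deviation:
  fixes \<phi> :: "nat \<Rightarrow> real"
  assumes B: "B > 0" and lo: "p * B \<le> J" and hi: "J \<le> Suc p * B" and K: "\<bar>\<phi> p\<bar> \<le> K"
  shows "\<bar>(\<Sum>j<J. \<phi> (j div B)) - real B * (\<Sum>q<Suc p. \<phi> q)\<bar> \<le> real B * K"
proof (cases "J = Suc p * B")
  case True
  then have "J div B = Suc p" "J mod B = 0" using B by simp_all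
  then show ?thesis using sum_div_blocks_partial[OF B, of \<phi> J] K B by simp
next
  case False
  then have J: "J < Suc p * B" using hi by simp
  then have d: "J div B = p" using lo B by (auto intro: div_nat_eqI simp: mult.commute)
  have mB: "J mod B < B" using B by simp
  have "(\<Sum>j<J. \<phi> (j div B)) - real B * (\<Sum>q<Suc p. \<phi> q) = (real (J mod B) - real B) * \<phi> p"
    using sum_div_blocks_partial[OF B, of \<phi> J] d by (simp add: algebra_simps)
  also have "\<bar>\<dots>\<bar> \<le> real B * K"
  proof -
    have "\<bar>real (J mod B) - real B\<bar> \<le> real B" using mB by simp
    then show ?thesis using K by (simp add: abs_mult mult_mono)
  qed
  finally show ?thesis .
qed

lemma powr_half_sq: "(2 powr (- real n / 2)) * (2 powr (- real n / 2)) = 1 / (2::real)^n"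
proof -
  have "(2::real) powr (- real n / 2) * 2 powr (- real n / 2) = 2 powr (- real n)"
    by (simp add: powr_add[symmetric])
  also have "\<dots> = 1 / 2^n" by (simp add: powr_minus powr_realpow divide_inverse)
  finally show ?thesis .
qed

lemma alt_sign_sq: "alt_sign i * alt_sign i = 1"
  by (simp add: alt_sign_def)

lemma level_increment_diag_sum:
  assumes nm: "n < m" and t: "0 \<le> t" "t \<le> 1"
    and u: "\<forall>k\<le>2^n. \<bar>u k\<bar> \<le> M" and v: "\<forall>k\<le>2^n. \<bar>v k\<bar> \<le> M"
  shows "\<bar>(\<Sum>j<dyadic_count m t. level_increment u m n j * level_increment v m n j) - (\<Sum>q<dyadic_count n t. u q * v q) / 2^m\<bar> \<le> M * M / 2^m"
proof -
  define B where "B = (2::nat)^(m-n)"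
  have pmr: "(2::real)^m = 2^n * real B" unfolding B_def using nm by (simp add: power_add[symmetric])
  have Bpos: "B > 0" unfolding B_def by simp
  define \<phi> where "\<phi> q = u q * v q" for q
  have eq: "level_increment u m n j * level_increment v m n j = \<phi> (j div B) / (2^n * real B * real B)" for j
  proof -
    have "level_increment u m n j * level_increment v m n j = \<phi> (j div B) * ((2 powr (- real n / 2)) * (2 powr (- real n / 2))) * (alt_sign (j div 2^(m-n-1)) * alt_sign (j div 2^(m-n-1))) / (real B * real B)"
      unfolding level_increment_def \<phi>_def B_def by (simp add: field_simps)
    then show ?thesis unfolding powr_half_sq alt_sign_sq by simp
  qed
  define p where "p = dyadic_count n t - 1"
  have Q: "dyadic_count n t = Suc p" using dyadic_count_bounds(1)[OF t, of n] unfolding p_def by simp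
  have lo: "p * B \<le> dyadic_count m t" and hi: "dyadic_count m t \<le> Suc p * B"
    using dyadic_count_refine[OF less_imp_le[OF nm] t] Q unfolding p_def B_def by auto
  have pb: "p \<le> 2^n" using dyadic_count_bounds(2)[OF t, of n] Q by simp
  have K: "\<bar>\<phi> p\<bar> \<le> M * M" unfolding \<phi>_def using u v pb
    by (simp add: abs_mult mult_mono' order_trans[OF abs_ge_zero])
  note db = sum_div_blocks_deviation[where \<phi>=\<phi>, OF Bpos lo hi K]
  have "(\<Sum>j<dyadic_count m t. level_increment u m n j * level_increment v m n j) - (\<Sum>q<dyadic_count n t. u q * v q) / 2^m
      = ((\<Sum>j<dyadic_count m t. \<phi> (j div B)) - real B * (\<Sum>q<Suc p. \<phi> q)) / (2^n * real B * real B)"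
    unfolding eq Q pmr \<phi>_def using Bpos by (simp add: sum_divide_distrib[symmetric] field_simps)
  also have "\<bar>\<dots>\<bar> \<le> real B * (M * M) / (2^n * real B * real B)"
  proof -
    have d: "0 < 2^n * real B * real B" using Bpos by simp
    show ?thesis by (simp only: abs_divide abs_of_pos[OF d]) (rule divide_right_mono[OF db less_imp_le[OF d]])
  qed
  also have "\<dots> = M * M / 2^m" unfolding pmr using Bpos by (simp add: field_simps)
  finally show ?thesis .
qed

lemma div_pow2_le:
  assumes "J \<le> 2^m" "k \<le> m"
  shows "J div 2^(m-k) \<le> (2::nat)^k"
proof -
  have "(2::nat)^m = 2^k * 2^(m-k)" using assms(2) by (simp flip: power_add)
  then have "2^m div 2^(m-k) = (2::nat)^k" by simp
  moreover have "J div 2^(m-k) \<le> 2^m div 2^(m-k)" using assms(1) by (rule div_le_mono)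
  ultimately show ?thesis by simp
qed

lemma level_increment_offdiag_weight:
  assumes "n < n'" "n' < m"
  shows "real (2^(m-n'-1)) * (2 powr (- real n / 2) * 2 powr (- real n' / 2) / (2^(m-n) * 2^(m-n')))
           \<le> 1 / (2::real)^m"
proof -
  have "2 powr (- real n / 2) * 2 powr (- real n' / 2) = (2::real) powr (- ((real n + real n') / 2))"
    unfolding powr_add[symmetric] by (rule arg_cong[where f="\<lambda>x. 2 powr x"]) (simp add: field_simps)
  also have "\<dots> \<le> 2 powr (- real n)" using assms by (intro powr_mono) auto
  also have "\<dots> = 1 / 2^n" by (simp add: powr_minus powr_realpow divide_inverse)
  finally have pw: "2 powr (- real n / 2) * 2 powr (- real n' / 2) \<le> 1 / (2::real)^n" .
  have "(2::real)^(m-n') = 2 * 2^(m-n'-1)" using assms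
    by (metis Suc_diff_Suc diff_Suc_1 power_Suc zero_less_diff)
  moreover have "(2::real)^m = 2^n * 2^(m-n)" using assms by (simp flip: power_add)
  ultimately show ?thesis using pw by (simp add: field_simps)
qed

text \<open>On each block of \<open>2 * 2^(m-n'-1)\<close> consecutive indices \<open>j\<close> the coarse increment (level \<open>n\<close>)
  is constant, while the sign of the fine one (level \<open>n'\<close>) flips halfway; so full blocks cancel and
  only the last, partial block contributes.\<close>
lemma level_increment_offdiag_sum:
  assumes nn: "n < n'" and nm: "n' < m" and J: "J \<le> 2^m"
    and u: "\<forall>k\<le>2^n. \<bar>u k\<bar> \<le> M" and v: "\<forall>k\<le>2^n'. \<bar>v k\<bar> \<le> M"
  shows "\<bar>\<Sum>j<J. level_increment u m n j * level_increment v m n' j\<bar> \<le> M * M / 2^m"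
proof -
  define C where "C = (2::nat)^(m-n'-1)"
  define e where "e = n' - n"
  have "C > 0" unfolding C_def by simp
  have p1: "(2::nat)^(m-n') = C * 2" unfolding C_def using nm
    by (metis Suc_diff_Suc diff_Suc_1 mult.commute power_Suc zero_less_diff)
  have p2: "(2::nat)^(m-n) = C * 2 * 2^e" unfolding p1[symmetric] e_def using nn nm
    by (simp flip: power_add)
  have e1: "(2::nat)^e = 2 * 2^(e-1)" unfolding e_def using nn
    by (metis Suc_diff_Suc diff_Suc_1 power_Suc zero_less_diff)
  have p3: "(2::nat)^(m-n-1) = C * 2^e"
  proof -
    have "(2::nat)^(m-n) = 2 * 2^(m-n-1)" using nm nn
      by (metis Suc_diff_Suc diff_Suc_1 less_trans power_Suc zero_less_diff)
    then show ?thesis using p2 by simp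
  qed
  have d1: "j div 2^(m-n) = j div C div 2 div 2^e" for j unfolding p2 by (simp add: div_mult2_eq)
  have d3: "j div 2^(m-n') = j div C div 2" for j unfolding p1 by (simp add: div_mult2_eq)
  define W :: real where "W = 2 powr (- real n / 2) * 2 powr (- real n' / 2) / (2^(m-n) * 2^(m-n'))"
  define c where "c p = u (p div 2^e) * alt_sign (p div 2^(e-1)) * v p * W" for p
  have eq: "level_increment u m n j * level_increment v m n' j = c (j div C div 2) * alt_sign (j div C)"
    for j
  proof -
    have d2: "j div 2^(m-n-1) = j div C div 2 div 2^(e-1)" unfolding p3 e1 by (simp add: div_mult2_eq)
    show ?thesis unfolding level_increment_def d1 d2 d3 c_def W_def alt_sign_def C_def
      by (simp add: field_simps)
  qed
  have "J div C div 2 \<le> 2^n'" "J div C div 2 div 2^e \<le> 2^n"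
    using div_pow2_le[OF J, of n'] div_pow2_le[OF J, of n] nn nm unfolding d1 d3 by auto
  moreover have "0 \<le> W" unfolding W_def by simp
  ultimately have "\<bar>c (J div C div 2)\<bar> \<le> M * M * W"
    unfolding c_def using u v
    by (simp add: abs_mult alt_sign_def mult_mono' mult_right_mono order_trans[OF abs_ge_zero])
  then have "\<bar>\<Sum>j<J. level_increment u m n j * level_increment v m n' j\<bar> \<le> real C * (M * M * W)"
    unfolding eq by (rule sum_alt_blocks_bound[OF \<open>C > 0\<close>])
  also have "\<dots> = M * M * (real C * W)" by simp
  also have "\<dots> \<le> M * M * (1 / 2^m)"
    using level_increment_offdiag_weight[OF nn nm] unfolding C_def W_def by (intro mult_left_mono) simp_all
  finally show ?thesis by simp
qed


section \<open>Convergence of the discrete covariation\<close>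

lemma dyadic_average_null:
  fixes P :: "nat \<Rightarrow> real"
  assumes "P \<longlonglongrightarrow> 0"
  shows "(\<lambda>m. \<Sum>n<m. 2^n / 2^m * P n) \<longlonglongrightarrow> 0"
proof (rule LIMSEQ_I)
  fix r :: real assume "r > 0"
  define a where "a m = (\<Sum>n<m. 2^n / 2^m * P n)" for m
  have a_Suc: "a (Suc m) = (a m + P m) / 2" for m
    unfolding a_def by (simp add: field_simps sum_distrib_left flip: sum_divide_distrib)
  obtain N where N: "\<And>n. n \<ge> N \<Longrightarrow> \<bar>P n\<bar> < r/2"
    using LIMSEQ_D[OF assms, of "r/2"] \<open>r > 0\<close> by auto
  \<comment> \<open>Beyond \<open>N\<close>, the recursion halves the old error and adds at most \<open>r/4\<close>.\<close>
  have bound: "\<bar>a m\<bar> \<le> \<bar>a N\<bar> * 2^N / 2^m + r/2" if "N \<le> m" for m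
    using that
  proof (induction m rule: dec_induct)
    case (step m)
    have "\<bar>a (Suc m)\<bar> \<le> (\<bar>a m\<bar> + \<bar>P m\<bar>) / 2" unfolding a_Suc by simp
    also have "\<dots> \<le> (\<bar>a N\<bar> * 2^N / 2^m + r/2 + r/2) / 2"
      using step.IH N[OF step.hyps(1)] by (intro divide_right_mono) linarith+
    also have "\<dots> = \<bar>a N\<bar> * 2^N / 2^Suc m + r/2" by (simp add: field_simps)
    finally show ?case .
  qed (use \<open>r > 0\<close> in simp)
  have "(\<lambda>m. \<bar>a N\<bar> * 2^N / (2::real)^m) \<longlonglongrightarrow> 0" by real_asymp
  then obtain N' where N': "\<And>m. m \<ge> N' \<Longrightarrow> \<bar>a N\<bar> * 2^N / 2^m < r/2"
    using LIMSEQ_D[of _ 0 "r/2"] \<open>r > 0\<close> by fastforce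
  show "\<exists>N. \<forall>m\<ge>N. norm (a m - 0) < r"
  proof (intro exI[of _ "max N N'"] allI impI)
    fix m assume "max N N' \<le> m"
    then have "N \<le> m" "N' \<le> m" by auto
    then show "norm (a m - 0) < r" using bound[of m] N'[of m] unfolding diff_zero real_norm_def by linarith
  qed
qed

lemma dyadic_average_tendsto:
  fixes P :: "nat \<Rightarrow> real"
  assumes "P \<longlonglongrightarrow> L"
  shows "(\<lambda>m. \<Sum>n<m. 2^n / 2^m * P n) \<longlonglongrightarrow> L"
proof -
  have weights: "(\<Sum>n<m. (2::real)^n / 2^m) = 1 - 1 / 2^m" for m
  proof -
    have "(\<Sum>n<m. (2::real)^n) = 2^m - 1" by (induction m) auto
    then show ?thesis by (simp add: diff_divide_distrib flip: sum_divide_distrib)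
  qed
  have "(\<lambda>n. P n - L) \<longlonglongrightarrow> 0" using assms by (simp add: LIMSEQ_iff)
  moreover have "(\<lambda>m. 1 / (2::real)^m) \<longlonglongrightarrow> 0" by real_asymp
  ultimately have "(\<lambda>m. (\<Sum>n<m. 2^n / 2^m * (P n - L)) + L * (1 - 1 / 2^m)) \<longlonglongrightarrow> 0 + L * (1 - 0)"
    by (intro tendsto_intros dyadic_average_null)
  moreover have "(\<Sum>n<m. 2^n / 2^m * (P n - L)) + L * (1 - 1 / 2^m) = (\<Sum>n<m. 2^n / 2^m * P n)" for m
  proof -
    have "(\<Sum>n<m. 2^n / 2^m * P n) = (\<Sum>n<m. 2^n / 2^m * (P n - L) + L * (2^n / 2^m))"
      by (intro sum.cong refl) (simp add: field_simps)
    also have "\<dots> = (\<Sum>n<m. 2^n / 2^m * (P n - L)) + L * (1 - 1 / 2^m)"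
      by (simp only: sum.distrib weights flip: sum_distrib_left)
    finally show ?thesis by simp
  qed
  ultimately show ?thesis by simp
qed


lemma cov_n_xF_eq:
  assumes t: "0 \<le> t" "t \<le> 1"
  shows "cov_n m (xF f) (xF g) t = (\<Sum>n<m. \<Sum>n'<m. \<Sum>j<dyadic_count m t.
    level_increment (\<lambda>k. f n (real k / 2^n)) m n j * level_increment (\<lambda>k. g n' (real k / 2^n')) m n' j)"
proof -
  have "cov_n m (xF f) (xF g) t = (\<Sum>j<dyadic_count m t.
      (\<Sum>n<m. level_increment (\<lambda>k. f n (real k / 2^n)) m n j)
      * (\<Sum>n'<m. level_increment (\<lambda>k. g n' (real k / 2^n')) m n' j))"
    unfolding cov_n_dyadic_sum[OF t]
  proof (rule sum.cong[OF refl])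
    fix j assume "j \<in> {..<dyadic_count m t}"
    then have "j < 2^m" using dyadic_count_iff[OF t(1)] by simp
    then show "(xF f (real (Suc j) / 2^m) - xF f (real j / 2^m))
        * (xF g (real (Suc j) / 2^m) - xF g (real j / 2^m))
        = (\<Sum>n<m. level_increment (\<lambda>k. f n (real k / 2^n)) m n j)
          * (\<Sum>n'<m. level_increment (\<lambda>k. g n' (real k / 2^n')) m n' j)"
      unfolding xF_dyadic_diff[OF \<open>j < 2^m\<close>] by simp
  qed
  then show ?thesis
    unfolding sum_product by (simp add: sum.swap[of _ "{..<dyadic_count m t}"])
qed

lemma cov_n_xF_approx:
  assumes t: "0 \<le> t" "t \<le> 1"
    and M: "\<And>n k. k \<le> 2^n \<Longrightarrow> \<bar>f n (real k / 2^n)\<bar> \<le> M \<and> \<bar>g n (real k / 2^n)\<bar> \<le> M"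
  shows "\<bar>cov_n m (xF f) (xF g) t - (\<Sum>n<m. 2^n / 2^m
           * ((\<Sum>q<dyadic_count n t. f n (real q / 2^n) * g n (real q / 2^n)) / 2^n))\<bar>
         \<le> real m * real m * (M * M / 2^m)"
proof -
  define U where "U n k = f n (real k / 2^n)" for n k
  define V where "V n k = g n (real k / 2^n)" for n k
  have U: "\<forall>k\<le>2^n. \<bar>U n k\<bar> \<le> M" and V: "\<forall>k\<le>2^n. \<bar>V n k\<bar> \<le> M" for n
    using M unfolding U_def V_def by auto
  define J where "J = dyadic_count m t"
  have "J \<le> 2^m" unfolding J_def using dyadic_count_bounds(2)[OF t] .
  define T where "T n n' = (\<Sum>j<J. level_increment (U n) m n j * level_increment (V n') m n' j)"
    for n n'
  define E where "E n n' = (if n = n' then (\<Sum>q<dyadic_count n t. U n q * V n q) / 2^m else 0)"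
    for n n'
  have cov: "cov_n m (xF f) (xF g) t = (\<Sum>n<m. \<Sum>n'<m. T n n')"
    unfolding cov_n_xF_eq[OF t] T_def J_def U_def V_def ..
  have avg: "(\<Sum>n<m. 2^n / 2^m * ((\<Sum>q<dyadic_count n t. f n (real q / 2^n) * g n (real q / 2^n)) / 2^n))
      = (\<Sum>n<m. \<Sum>n'<m. E n n')"
    unfolding E_def U_def V_def by (intro sum.cong) (auto simp: sum.delta)
  \<comment> \<open>Only the diagonal terms survive, each up to an error \<open>M\<^sup>2 / 2^m\<close>.\<close>
  have entry: "\<bar>T n n' - E n n'\<bar> \<le> M * M / 2^m" if "n < m" "n' < m" for n n'
  proof -
    consider "n = n'" | "n < n'" | "n' < n" by linarith
    then show ?thesis
    proof cases
      case 1
      then show ?thesis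
        unfolding T_def E_def J_def using level_increment_diag_sum[OF that(1) t U V] by simp
    next
      case 2
      then show ?thesis
        unfolding T_def E_def using level_increment_offdiag_sum[OF 2 that(2) \<open>J \<le> 2^m\<close> U V] by simp
    next
      case 3
      then show ?thesis
        unfolding T_def E_def using level_increment_offdiag_sum[OF 3 that(1) \<open>J \<le> 2^m\<close> V U]
        by (simp add: mult.commute)
    qed
  qed
  have "\<bar>(\<Sum>n<m. \<Sum>n'<m. T n n') - (\<Sum>n<m. \<Sum>n'<m. E n n')\<bar>
      = \<bar>\<Sum>n<m. \<Sum>n'<m. T n n' - E n n'\<bar>"
    by (simp add: sum_subtractf)
  also have "\<dots> \<le> (\<Sum>n<m. \<Sum>n'<m. M * M / 2^m)"
    by (rule order.trans[OF sum_abs sum_mono], rule order.trans[OF sum_abs sum_mono])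
      (use entry in auto)
  also have "\<dots> = real m * real m * (M * M / 2^m)" by simp
  finally show ?thesis unfolding cov avg .
qed

lemma cov_n_xF_tendsto:
  assumes f: "classF f finf" and g: "classF g ginf" and t: "0 \<le> t" "t \<le> 1"
  shows "(\<lambda>m. cov_n m (xF f) (xF g) t) \<longlonglongrightarrow> integral {0..t} (\<lambda>s. finf s * ginf s)"
proof -
  obtain M where M: "\<And>n x. x \<in> {0..1} \<Longrightarrow> \<bar>f n x\<bar> \<le> M \<and> \<bar>g n x\<bar> \<le> M"
    using classF_bounded_pair[OF f g] by metis
  define P where "P n = (\<Sum>q<dyadic_count n t. f n (real q / 2^n) * g n (real q / 2^n)) / 2^n" for n
  define R where "R m = (\<Sum>n<m. 2^n / 2^m * P n)" for m
  have "R \<longlonglongrightarrow> integral {0..t} (\<lambda>s. finf s * ginf s)"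
    unfolding R_def P_def by (intro dyadic_average_tendsto classF_dyadic_sums_tendsto f g t)
  moreover have "(\<lambda>m. cov_n m (xF f) (xF g) t - R m) \<longlonglongrightarrow> 0"
  proof (rule Lim_null_comparison)
    have "\<bar>f n (real k / 2^n)\<bar> \<le> M \<and> \<bar>g n (real k / 2^n)\<bar> \<le> M" if "k \<le> 2^n" for n k
      using M dyadic_le_one[OF that] by simp
    then show "\<forall>\<^sub>F m in sequentially. norm (cov_n m (xF f) (xF g) t - R m) \<le> real m * real m * (M * M / 2^m)"
      unfolding R_def P_def using cov_n_xF_approx[OF t] by simp
    show "(\<lambda>m. real m * real m * (M * M / 2^m)) \<longlonglongrightarrow> 0" by real_asymp
  qed
  ultimately have "(\<lambda>m. (cov_n m (xF f) (xF g) t - R m) + R m)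
      \<longlonglongrightarrow> 0 + integral {0..t} (\<lambda>s. finf s * ginf s)"
    by (intro tendsto_add)
  then show ?thesis by simp
qed

section \<open>Linearity\<close>

lemma fs_level_bound:
  assumes M: "\<forall>k<2^n. \<bar>f n (real k / 2^n)\<bar> \<le> M"
  shows "\<bar>fs_level f n t\<bar> \<le> M * 2 powr (- real n / 2)"
proof (cases "\<exists>q<2^n. real q \<le> 2^n * t \<and> 2^n * t \<le> real q + 1")
  case True
  then obtain q where q: "q < 2^n" "real q \<le> 2^n * t" "2^n * t \<le> real q + 1" by blast
  have "fs_level f n t = f n (real q / 2^n) * fs n q t" using fs_level_single[OF q] .
  also have "\<bar>\<dots>\<bar> \<le> M * 2 powr (- real n / 2)"
  proof -
    have e: "0 \<le> e00 x \<and> e00 x \<le> 1" for x by (auto simp: e00_def)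
    have "\<bar>fs n q t\<bar> \<le> 2 powr (- real n / 2)"
      unfolding fs_def using e[of "2 ^ n * t - real q"] by (simp add: abs_mult mult_left_le)
    then show ?thesis using M q(1) by (simp add: abs_mult mult_mono')
  qed
  finally show ?thesis .
next
  case False
  have "fs_level f n t = 0" unfolding fs_level_def
  proof (rule sum.neutral, intro ballI)
    fix k :: nat assume k: "k \<in> {..<2^n}"
    have "2^n * t - real k \<le> 0 \<or> 2^n * t - real k \<ge> 1"
      using False k by (metis lessThan_iff diff_ge_0_iff_ge le_diff_eq add.commute nle_le)
    then show "f n (real k / 2^n) * fs n k t = 0" by (simp add: fs_def e00_eq_0)
  qed
  moreover have "M \<ge> 0" using M[rule_format, of 0] by simp
  ultimately show ?thesis by simp
qed

lemma summable_fs_level: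
  assumes "classF f finf"
  shows "summable (\<lambda>n. fs_level f n t)"
proof -
  obtain M where M: "\<forall>n. \<forall>x\<in>{0..1}. \<bar>f n x\<bar> \<le> M \<and> \<bar>finf x\<bar> \<le> M" using classF_bounded[OF assms] by blast
  have Mk: "\<forall>k<2^n. \<bar>f n (real k / 2^n)\<bar> \<le> M" for n
  proof (intro allI impI)
    fix k :: nat assume "k < 2^n"
    then have "real k / 2^n \<in> {0..1}" using dyadic_in_unit by blast
    then show "\<bar>f n (real k / 2^n)\<bar> \<le> M" using M by blast
  qed
  define c :: real where "c = 2 powr (- 1 / 2)"
  have c: "norm c < 1" unfolding c_def by (simp add: powr_minus_divide powr_gt_zero)
  have pw: "2 powr (- real n / 2) = c ^ n" for n
    unfolding c_def by (simp add: powr_realpow[symmetric] powr_powr)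
  show ?thesis
  proof (rule summable_comparison_test'[of "\<lambda>n. M * c ^ n" 0])
    show "summable (\<lambda>n. M * c ^ n)" by (intro summable_mult summable_geometric c)
    show "norm (fs_level f n t) \<le> M * c ^ n" for n using fs_level_bound[where f=f and n=n and M=M and t=t, OF Mk[of n]] pw by simp
  qed
qed

lemma xF_lincomb:
  assumes f: "classF f finf" and g: "classF g ginf"
  shows "xF (\<lambda>n x. a * f n x + b * g n x) t = a * xF f t + b * xF g t"
proof -
  have "fs_level (\<lambda>n x. a * f n x + b * g n x) n t = a * fs_level f n t + b * fs_level g n t" for n
    unfolding fs_level_def by (simp add: sum.distrib sum_distrib_left algebra_simps)
  moreover have "xF (\<lambda>n x. a * f n x + b * g n x) t = (\<Sum>n. fs_level (\<lambda>n x. a * f n x + b * g n x) n t)"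
    unfolding xF_def fs_level_def ..
  ultimately have "xF (\<lambda>n x. a * f n x + b * g n x) t = (\<Sum>n. a * fs_level f n t + b * fs_level g n t)"
    by simp
  also have "\<dots> = a * (\<Sum>n. fs_level f n t) + b * (\<Sum>n. fs_level g n t)"
    using summable_fs_level[OF f, of t] summable_fs_level[OF g, of t]
    by (simp add: suminf_add[symmetric] suminf_mult summable_mult)
  finally show ?thesis unfolding xF_def fs_level_def .
qed

lemma riemann_integrable_on_lincomb:
  assumes f: "riemann_integrable_on f c d" and g: "riemann_integrable_on g c d"
  shows "riemann_integrable_on (\<lambda>x. a * f x + b * g x) c d"
proof -
  let ?S = "\<lambda>D h. \<Sum>(x,K)\<in>D. Henstock_Kurzweil_Integration.content K * h x"
  obtain I1 I2 where
    I1: "\<forall>\<epsilon>>0. \<exists>\<delta>>0. \<forall>D. D tagged_division_of {c..d} \<and> (\<lambda>x. ball x \<delta>) fine D \<longrightarrow>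
      \<bar>?S D f - I1\<bar> < \<epsilon>" and
    I2: "\<forall>\<epsilon>>0. \<exists>\<delta>>0. \<forall>D. D tagged_division_of {c..d} \<and> (\<lambda>x. ball x \<delta>) fine D \<longrightarrow>
      \<bar>?S D g - I2\<bar> < \<epsilon>"
    using f g unfolding riemann_integrable_on_def by blast
  have "\<exists>\<delta>>0. \<forall>D. D tagged_division_of {c..d} \<and> (\<lambda>x. ball x \<delta>) fine D \<longrightarrow>
      \<bar>?S D (\<lambda>x. a * f x + b * g x) - (a * I1 + b * I2)\<bar> < \<epsilon>" if "\<epsilon> > 0" for \<epsilon>
  proof -
    define e where "e = \<epsilon> / (2 * (\<bar>a\<bar> + \<bar>b\<bar> + 1))"
    have "e > 0" unfolding e_def using \<open>\<epsilon> > 0\<close> by (simp add: add_pos_nonneg)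
    obtain \<delta>1 where "\<delta>1 > 0" and
      \<delta>1: "\<forall>D. D tagged_division_of {c..d} \<and> (\<lambda>x. ball x \<delta>1) fine D \<longrightarrow> \<bar>?S D f - I1\<bar> < e"
      using I1 \<open>e > 0\<close> by blast
    obtain \<delta>2 where "\<delta>2 > 0" and
      \<delta>2: "\<forall>D. D tagged_division_of {c..d} \<and> (\<lambda>x. ball x \<delta>2) fine D \<longrightarrow> \<bar>?S D g - I2\<bar> < e"
      using I2 \<open>e > 0\<close> by blast
    have "\<bar>?S D (\<lambda>x. a * f x + b * g x) - (a * I1 + b * I2)\<bar> < \<epsilon>"
      if D: "D tagged_division_of {c..d}" "(\<lambda>x. ball x (min \<delta>1 \<delta>2)) fine D" for D
    proof -
      have "(\<lambda>x. ball x \<delta>1) fine D" "(\<lambda>x. ball x \<delta>2) fine D" using D(2) unfolding fine_def by force+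
      then have "\<bar>?S D f - I1\<bar> < e" "\<bar>?S D g - I2\<bar> < e" using \<delta>1 \<delta>2 D(1) by blast+
      have "?S D (\<lambda>x. a * f x + b * g x) - (a * I1 + b * I2)
          = a * (?S D f - I1) + b * (?S D g - I2)"
        by (simp add: sum.distrib sum_distrib_left split_def algebra_simps)
      then have "\<bar>?S D (\<lambda>x. a * f x + b * g x) - (a * I1 + b * I2)\<bar>
          \<le> \<bar>a * (?S D f - I1)\<bar> + \<bar>b * (?S D g - I2)\<bar>"
        by (simp only: abs_triangle_ineq)
      also have "\<dots> = \<bar>a\<bar> * \<bar>?S D f - I1\<bar> + \<bar>b\<bar> * \<bar>?S D g - I2\<bar>"
        by (simp only: abs_mult)
      also have "\<dots> \<le> \<bar>a\<bar> * e + \<bar>b\<bar> * e"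
        using \<open>\<bar>?S D f - I1\<bar> < e\<close> \<open>\<bar>?S D g - I2\<bar> < e\<close>
        by (intro add_mono mult_left_mono) auto
      also have "\<dots> = (\<bar>a\<bar> + \<bar>b\<bar>) * e" by (simp add: algebra_simps)
      also have "\<dots> < 2 * (\<bar>a\<bar> + \<bar>b\<bar> + 1) * e" using \<open>e > 0\<close> by (intro mult_strict_right_mono) auto
      also have "\<dots> = \<epsilon>" unfolding e_def by (simp add: add_pos_nonneg)
      finally show ?thesis .
    qed
    then show ?thesis using \<open>\<delta>1 > 0\<close> \<open>\<delta>2 > 0\<close> by (intro exI[of _ "min \<delta>1 \<delta>2"]) auto
  qed
  then show ?thesis unfolding riemann_integrable_on_def by blast
qed

lemma classF_lincomb:
  assumes f: "classF f finf" and g: "classF g ginf"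
  shows "classF (\<lambda>n x. a * f n x + b * g n x) (\<lambda>x. a * finf x + b * ginf x)"
  unfolding classF_def
proof (intro conjI allI)
  have scaled: "bounded ((\<lambda>x. c * h x) ` {0..1})" if "bounded (h ` {0..1})" for c and h :: "real \<Rightarrow> real"
    using bounded_scaling[OF that, of c] by (simp add: image_image)
  show "bounded ((\<lambda>x. a * f n x + b * g n x) ` {0..1})" for n
    using f g unfolding classF_def by (intro bounded_plus_comp scaled) auto
  show "uniform_limit {0..1} (\<lambda>n x. a * f n x + b * g n x) (\<lambda>x. a * finf x + b * ginf x) sequentially"
    using f g unfolding classF_def by (intro uniform_limit_intros) auto
  show "riemann_integrable_on (\<lambda>x. a * finf x + b * ginf x) 0 1"
    using f g unfolding classF_def by (intro riemann_integrable_on_lincomb) auto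
qed

theorem proposition2p4:
  shows "(\<forall>f finf. classF f finf \<longrightarrow>
            (\<forall>t\<in>{0..1}. (\<lambda>n. qv_n n (xF f) t) \<longlonglongrightarrow> integral {0..t} (\<lambda>s. (finf s)\<^sup>2)) \<and>
            continuous_on {0..1} (\<lambda>t. integral {0..t} (\<lambda>s. (finf s)\<^sup>2)))
       \<and> (\<forall>f finf g ginf. classF f finf \<and> classF g ginf \<longrightarrow>
            (\<forall>t\<in>{0..1}. (\<lambda>n. cov_n n (xF f) (xF g) t) \<longlonglongrightarrow> integral {0..t} (\<lambda>s. finf s * ginf s)) \<and>
            continuous_on {0..1} (\<lambda>t. integral {0..t} (\<lambda>s. finf s * ginf s)))
       \<and> (\<forall>f finf g ginf (a::real) (b::real). classF f finf \<and> classF g ginf \<longrightarrow>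
            (\<exists>h hinf. classF h hinf \<and> (\<forall>t\<in>{0..1}. xF h t = a * xF f t + b * xF g t)))"
proof -
  have cov: "(\<forall>t\<in>{0..1}. (\<lambda>n. cov_n n (xF f) (xF g) t) \<longlonglongrightarrow> integral {0..t} (\<lambda>s. finf s * ginf s))
      \<and> continuous_on {0..1} (\<lambda>t. integral {0..t} (\<lambda>s. finf s * ginf s))"
    if "classF f finf" "classF g ginf" for f finf g ginf
    using cov_n_xF_tendsto[OF that] indefinite_integral_continuous_1[OF classF_integrable_on_mult[OF that]]
    by auto
  moreover have "\<exists>h hinf. classF h hinf \<and> (\<forall>t\<in>{0..1}. xF h t = a * xF f t + b * xF g t)"
    if "classF f finf" "classF g ginf" for f finf g ginf and a b :: real
    using classF_lincomb[OF that, of a b] xF_lincomb[OF that, of a b] by blast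
  ultimately show ?thesis unfolding qv_n_def power2_eq_square by blast
qed

end
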